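(* Let $P \subset \mathbb{R}^d$ be a finite point set and let $\mathcal{Q}:\mathbb{R}^d \to P$ be any map. Define the witness-based distance function $\widetilde{d}_{\mathcal{Q}}(x) = \|x - \mathcal{Q}(x)\|$. If there exists at least one point $x \in \mathbb{R}^d$ with $\widetilde{d}_{\mathcal{Q}}(x) \neq d_P(x)$, then $\widetilde{d}_{\mathcal{Q}}$ cannot simultaneously be continuous on $\mathbb{R}^d$ and satisfy a finite relative error bound, i.e. there is no pair of properties "$\widetilde{d}_{\mathcal{Q}}$ is continuous" and "there is a constant $c>0$ with $|\widetilde{d}_{\mathcal{Q}}(y) - d_P(y)| \leq c\, d_P(y)$ for all $y \in \mathbb{R}^d$" holding at the same time.
   Context: $\|\cdot\|$ is the Euclidean norm and $d_P(x) = \min_{p \in P} \|x - p\|$ is the distance from $x$ to $P$. A function of the form $\widetilde{d}_{\mathcal{Q}}(x) = \|x - \mathcal{Q}(x)\|$, where $\mathcal{Q}$ assigns to each query point a "witness" point of $P$, is called witness-based; note $\widetilde{d}_{\mathcal{Q}} \geq d_P$ always. The relative error of $\widetilde{d}_{\mathcal{Q}}$ at $y$ is $(\widetilde{d}_{\mathcal{Q}}(y)-d_P(y))/d_P(y)$. *)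

theory Defs
  imports "HOL-Analysis.Analysis"
begin

definition distP :: "'a::euclidean_space set \<Rightarrow> 'a \<Rightarrow> real" where
  "distP P x = Min ((\<lambda>p. norm (x - p)) ` P)"

definition witness_dist :: "('a::euclidean_space \<Rightarrow> 'a) \<Rightarrow> 'a \<Rightarrow> real" where
  "witness_dist Q x = norm (x - Q x)"

end

theory Submission
  imports Defs
begin

text \<open>
  The relative error bound forces the witness distance to vanish on \<open>P\<close>. Given a point \<open>x\<close>
  and a nearest point \<open>a \<in> P\<close>, every point of the half-open segment \<open>[a, x)\<close> has \<open>a\<close> as
  its unique nearest point. There the excess of the witness distance over the distance to
  \<open>a\<close> is either zero (witness \<open>a\<close>) or at least the positive gap to the second nearest
  point. Being continuous and zero at \<open>a\<close>, the excess cannot jump across this gap, so it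
  vanishes on the segment and, by continuity, at \<open>x\<close>. Hence the witness distance is exact.
\<close>

lemma distP_eq_infdist:
  assumes "finite P" "P \<noteq> {}"
  shows "distP P x = infdist x P"
proof -
  obtain a where "a \<in> P" "infdist x P = dist x a"
    using infdist_attains_inf[OF finite_imp_closed] assms by blast
  moreover have "infdist x P \<le> norm (x - q)" if "q \<in> P" for q
    using infdist_le[OF that] by (simp add: dist_norm)
  ultimately show ?thesis
    unfolding distP_def using assms by (intro Min_eqI) (auto simp: dist_norm)
qed

lemma norm_diff_lt_on_segment_to_nearest:
  fixes x a q :: "'a::real_inner"
  assumes "norm (x - a) \<le> norm (x - q)" "q \<noteq> a" "0 \<le> t" "t < 1"
  shows "norm (a + t *\<^sub>R (x - a) - a) < norm (a + t *\<^sub>R (x - a) - q)"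
proof -
  define u v where "u = a - q" and "v = x - a"
  have expand: "(norm (u + s *\<^sub>R v))\<^sup>2 = (norm u)\<^sup>2 + 2 * s * inner u v + s\<^sup>2 * (norm v)\<^sup>2" for s
    unfolding power2_norm_eq_inner
    by (simp add: inner_add_left inner_add_right inner_commute[of v u] power2_eq_square algebra_simps)
  have x_q: "x - q = u + 1 *\<^sub>R v" and y_q: "a + t *\<^sub>R (x - a) - q = u + t *\<^sub>R v"
    by (simp_all add: u_def v_def)
  have "(norm v)\<^sup>2 \<le> (norm (x - q))\<^sup>2"
    using assms(1) by (simp add: v_def power_mono)
  then have "0 \<le> t * ((norm u)\<^sup>2 + 2 * inner u v)"
    using assms(3) unfolding x_q expand by simp
  moreover have "0 < (1 - t) * (norm u)\<^sup>2"
    using assms(2,4) by (simp add: u_def)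
  moreover have "(norm (a + t *\<^sub>R (x - a) - a))\<^sup>2 = t\<^sup>2 * (norm v)\<^sup>2"
    by (simp add: v_def power_mult_distrib)
  ultimately have "(norm (a + t *\<^sub>R (x - a) - a))\<^sup>2 < (norm (a + t *\<^sub>R (x - a) - q))\<^sup>2"
    unfolding y_q expand by (simp add: algebra_simps)
  then show ?thesis
    by (rule power2_less_imp_less) simp
qed

lemma connected_zero_or_ge_pos_imp_zero:
  fixes f g :: "'a::topological_space \<Rightarrow> real"
  assumes "connected S" "continuous_on S f" "continuous_on S g"
    and "\<forall>z\<in>S. 0 < g z" "\<forall>z\<in>S. f z = 0 \<or> g z \<le> f z"
    and "a \<in> S" "f a = 0" "x \<in> S"
  shows "f x = 0"
proof (rule ccontr)
  assume "f x \<noteq> 0"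
  define h where "h z = f z - g z / 2" for z
  have "connected (h ` S)"
    unfolding h_def using assms(1-3) by (intro connected_continuous_image continuous_intros) auto
  moreover have "h a \<le> 0"
    using assms(4,6,7) by (auto simp: h_def)
  moreover have "0 \<le> h x"
    using assms(4,5,8) \<open>f x \<noteq> 0\<close> by (fastforce simp: h_def)
  ultimately have "0 \<in> h ` S"
    using connectedD_interval[of "h ` S" "h a" "h x" 0] assms(6,8) by blast
  then obtain z where "z \<in> S" "f z = g z / 2"
    by (auto simp: h_def)
  then show False
    using assms(4,5) by force
qed

lemma witness_dist_eq_or_ge_infdist_others:
  assumes "Q z \<in> P"
  shows "witness_dist Q z = norm (z - a) \<or> infdist z (P - {a}) \<le> witness_dist Q z"
proof (cases "Q z = a")
  case False
  then have "infdist z (P - {a}) \<le> dist z (Q z)"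
    using assms by (intro infdist_le) auto
  then show ?thesis
    by (simp add: witness_dist_def dist_norm)
qed (simp add: witness_dist_def)

lemma witness_dist_eq_norm_diff_nearest:
  fixes Q :: "'a::euclidean_space \<Rightarrow> 'a"
  assumes "finite P" "\<forall>z. Q z \<in> P" "continuous_on UNIV (witness_dist Q)"
    and "a \<in> P" "witness_dist Q a = 0" "\<forall>q\<in>P. norm (x - a) \<le> norm (x - q)"
  shows "witness_dist Q x = norm (x - a)"
proof (cases "Q x = a")
  case True
  then show ?thesis
    by (simp add: witness_dist_def)
next
  case False
  then have "P - {a} \<noteq> {}"
    using assms(2) by blast
  define y where "y t = a + t *\<^sub>R (x - a)" for t :: real
  define D where "D z = witness_dist Q z - norm (z - a)" for z
  define gap where "gap z = infdist z (P - {a}) - norm (z - a)" for z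
  have "continuous_on UNIV D"
    unfolding D_def by (intro continuous_intros assms(3))
  then have cont_D: "continuous_on S (\<lambda>t. D (y t))" for S
    unfolding y_def by (rule continuous_on_compose2) (auto intro!: continuous_intros)
  have cont_gap: "continuous_on S (\<lambda>t. gap (y t))" for S
    unfolding gap_def y_def by (intro continuous_intros)
  have gap_pos: "0 < gap (y t)" if "t \<in> {0..<1}" for t
  proof -
    obtain q where "q \<in> P - {a}" "infdist (y t) (P - {a}) = dist (y t) q"
      using infdist_attains_inf[OF finite_imp_closed \<open>P - {a} \<noteq> {}\<close>] assms(1) by blast
    then show ?thesis
      using norm_diff_lt_on_segment_to_nearest[of x a q t] assms(6) that
      by (simp add: gap_def y_def dist_norm)
  qed
  have "D z = 0 \<or> gap z \<le> D z" for z
    using witness_dist_eq_or_ge_infdist_others[of Q z P a] assms(2) by (auto simp: D_def gap_def)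
  moreover have "D (y 0) = 0"
    using assms(5) by (simp add: D_def y_def)
  ultimately have "D (y t) = 0" if "t \<in> {0..<1}" for t
    using connected_zero_or_ge_pos_imp_zero[OF _ cont_D cont_gap _ _ _ _ that, of 0] gap_pos
    by simp
  then have "D (y 1) = 0"
    using continuous_constant_on_closure[OF cont_D, of "{0..<1}" 0 1] by simp
  then show ?thesis
    by (simp add: D_def y_def)
qed

lemma witness_dist_eq_distP_if_continuous:
  fixes Q :: "'a::euclidean_space \<Rightarrow> 'a"
  assumes "finite P" "\<forall>z. Q z \<in> P" "continuous_on UNIV (witness_dist Q)"
    and "\<forall>p\<in>P. witness_dist Q p = 0"
  shows "witness_dist Q x = distP P x"
proof -
  have "P \<noteq> {}"
    using assms(2) by blast
  then obtain a where "a \<in> P" "infdist x P = dist x a"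
    using infdist_attains_inf[OF finite_imp_closed[OF assms(1)]] by blast
  moreover have "\<forall>q\<in>P. infdist x P \<le> dist x q"
    by (simp add: infdist_le)
  ultimately show ?thesis
    using witness_dist_eq_norm_diff_nearest[OF assms(1-3), of a x] assms(4)
      distP_eq_infdist[OF assms(1) \<open>P \<noteq> {}\<close>]
    by (simp add: dist_norm)
qed

lemma witness_dist_eq_zero_on_points:
  assumes "finite P" "p \<in> P" "\<forall>y. \<bar>witness_dist Q y - distP P y\<bar> \<le> c * distP P y"
  shows "witness_dist Q p = 0"
proof -
  have "distP P p = 0"
    using distP_eq_infdist[OF assms(1), of p] infdist_zero[OF assms(2)] assms(2) by (metis empty_iff)
  then show ?thesis
    using assms(3)[rule_format, of p] by simp
qed

theorem lemma1:
  fixes P :: "'a::euclidean_space set" and Q :: "'a \<Rightarrow> 'a"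
  assumes "finite P"
    and "\<forall>x. Q x \<in> P"
    and "\<exists>x. witness_dist Q x \<noteq> distP P x"
  shows "\<not> (continuous_on UNIV (witness_dist Q) \<and>
            (\<exists>c>0. \<forall>y. \<bar>witness_dist Q y - distP P y\<bar> \<le> c * distP P y))"
proof
  assume "continuous_on UNIV (witness_dist Q) \<and>
            (\<exists>c>0. \<forall>y. \<bar>witness_dist Q y - distP P y\<bar> \<le> c * distP P y)"
  then obtain c where cont: "continuous_on UNIV (witness_dist Q)"
    and bound: "\<forall>y. \<bar>witness_dist Q y - distP P y\<bar> \<le> c * distP P y"
    by blast
  have "\<forall>p\<in>P. witness_dist Q p = 0"
    using witness_dist_eq_zero_on_points[OF assms(1) _ bound] by blast
  then have "witness_dist Q x = distP P x" for x
    using witness_dist_eq_distP_if_continuous[OF assms(1,2) cont] by blast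
  then show False
    using assms(3) by blast
qed

end
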